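(* Let $A_1,\dots,A_k$ be $n$-dimensional boxes and $\mathcal{O}$ a set of orders of them (innermost to outermost) each of which would be a possible arrangement if the expansion bound were dropped, i.e. if an expanded side $a_i$ were allowed to take any length $a_i'\ge a_i$. Then there exist $n$-dimensional boxes $A'_1,\dots,A'_k$ such that every order in $\mathcal{O}$ (with corresponding labels) is a possible arrangement with the expansion bound $a_i'\le 2a_i$ in force.
   Context: An $n$-dimensional box $A$ has closed side lengths $a_1\le\dots\le a_n$ (positive reals). A state of $A$ is either closed or expanded along one side $i$: $a_i$ is replaced by $a_i'$ with $a_i\le a_i'$, other sides unchanged (only one side can expand); the expansion bound is the additional requirement $a_i'\le 2a_i$. The dimension vector of a state is its side lengths sorted non-decreasingly. A box in some state fits inside another box in some state if each coordinate of the outer one's dimension vector is strictly larger than the corresponding coordinate of the inner one's. An order $X_1,\dots,X_k$ (innermost to outermost) is a possible arrangement if each box can be given a state so that $X_j$ fits inside $X_{j+1}$ for all $j$; states may differ between arrangements. *)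

theory Defs
  imports Complex_Main
begin

text \<open>An n-dimensional box is given by its closed side lengths a_1 <= ... <= a_n,
  positive reals, represented as a sorted list of length n (index i-1 for side i).\<close>
definition is_box :: "nat \<Rightarrow> real list \<Rightarrow> bool" where
  "is_box n a \<longleftrightarrow> length a = n \<and> sorted a \<and> (\<forall>x\<in>set a. 0 < x)"

definition is_state :: "bool \<Rightarrow> real list \<Rightarrow> real list \<Rightarrow> bool" where
  "is_state bounded a v \<longleftrightarrow>
     v = a \<or>
     (\<exists>i<length a. \<exists>t. a ! i \<le> t \<and> (bounded \<longrightarrow> t \<le> 2 * a ! i) \<and> v = a[i := t])"

definition dim_vec :: "real list \<Rightarrow> real list" where
  "dim_vec v = sort v"

definition fits :: "real list \<Rightarrow> real list \<Rightarrow> bool" where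
  "fits v w \<longleftrightarrow> list_all2 (<) (dim_vec v) (dim_vec w)"

text \<open>An order of the boxes A_0,...,A_(k-1): a list listing each label exactly once,
  innermost first.\<close>
definition is_order :: "nat \<Rightarrow> nat list \<Rightarrow> bool" where
  "is_order k \<sigma> \<longleftrightarrow> distinct \<sigma> \<and> set \<sigma> = {0..<k}"

definition possible_arrangement :: "bool \<Rightarrow> (nat \<Rightarrow> real list) \<Rightarrow> nat list \<Rightarrow> bool" where
  "possible_arrangement bounded A \<sigma> \<longleftrightarrow>
     (\<exists>st :: nat \<Rightarrow> real list.
        (\<forall>j<length \<sigma>. is_state bounded (A (\<sigma> ! j)) (st j)) \<and>
        (\<forall>j. Suc j < length \<sigma> \<longrightarrow> fits (st j) (st (Suc j))))"

end

theory Submission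
  imports Defs "HOL-Library.Multiset"
begin

text \<open>Apply one strictly increasing map f from the reals into the interval (1, 2) to every
  side length, closed or expanded. Since f preserves the order and the strict inequalities
  among all lengths involved, it commutes with sorting and preserves fitting, so every
  arrangement of the old boxes becomes an arrangement of the new ones. Any two values of f
  are within a factor 2 of each other, so each unbounded expansion becomes one that at most
  doubles its side.\<close>

lemma sort_map_mono:
  fixes f :: "'a::linorder \<Rightarrow> 'b::linorder"
  assumes "mono f"
  shows "sort (map f xs) = map f (sort xs)"
proof (rule properties_for_sort)
  show "mset (map f (sort xs)) = mset (map f xs)" by simp
  show "sorted (map f (sort xs))"
    using assms by (simp add: sorted_map monoD sorted_wrt_mono_rel[of _ "(\<le>)"])
qed

lemma fits_map_strict_mono:
  fixes f :: "real \<Rightarrow> real"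
  assumes "strict_mono f"
  shows "fits (map f v) (map f w) \<longleftrightarrow> fits v w"
  using assms
  by (simp add: fits_def dim_vec_def sort_map_mono strict_mono_mono list_all2_map1
      list_all2_map2 strict_mono_less)

lemma is_box_map:
  assumes "mono f" and "\<And>x. 0 < f x" and "is_box n a"
  shows "is_box n (map f a)"
  using assms by (auto simp: is_box_def sorted_map monoD sorted_wrt_mono_rel[of _ "(\<le>)"])

lemma is_state_bounded_map:
  assumes "mono f" and ratio: "\<And>x y. f x \<le> 2 * f y"
    and "is_state False a v"
  shows "is_state True (map f a) (map f v)"
proof -
  consider "v = a" | i t where "i < length a" "a ! i \<le> t" "v = a[i := t]"
    using assms(3) unfolding is_state_def by blast
  then show ?thesis
  proof cases
    case 1
    then show ?thesis by (simp add: is_state_def)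
  next
    case (2 i t)
    with \<open>mono f\<close> ratio show ?thesis
      unfolding is_state_def
      by (intro disjI2 exI[of _ i] conjI exI[of _ "f t"]) (auto simp: monoD map_update)
  qed
qed

lemma possible_arrangement_bounded_map:
  assumes "strict_mono f" and "\<And>x y. f x \<le> 2 * f y"
    and "possible_arrangement False A \<sigma>"
  shows "possible_arrangement True (\<lambda>i. map f (A i)) \<sigma>"
proof -
  obtain st where "\<forall>j<length \<sigma>. is_state False (A (\<sigma> ! j)) (st j)"
    and "\<forall>j. Suc j < length \<sigma> \<longrightarrow> fits (st j) (st (Suc j))"
    using assms(3) unfolding possible_arrangement_def by blast
  with assms(1,2) show ?thesis
    unfolding possible_arrangement_def
    by (intro exI[of _ "\<lambda>j. map f (st j)"])
      (simp add: is_state_bounded_map strict_mono_mono fits_map_strict_mono)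
qed

definition squash :: "real \<Rightarrow> real" where
  "squash x = 3/2 + arctan x / pi"

lemma strict_mono_squash: "strict_mono squash"
  by (rule strict_monoI) (simp add: squash_def divide_strict_right_mono arctan_less_iff)

lemma squash_bounds: "1 < squash x \<and> squash x < 2"
proof -
  have "-(pi/2) < arctan x" "arctan x < pi/2" using arctan_bounded by auto
  then have "-(1/2) < arctan x / pi" "arctan x / pi < 1/2"
    by (simp_all add: field_simps)
  then show ?thesis unfolding squash_def by linarith
qed

lemma squash_le_double: "squash x \<le> 2 * squash y"
  using squash_bounds[of x] squash_bounds[of y] by linarith

theorem proposition25:
  fixes n k :: nat and A :: "nat \<Rightarrow> real list" and \<O> :: "nat list set"
  assumes "\<forall>i<k. is_box n (A i)"
    and "\<forall>\<sigma>\<in>\<O>. is_order k \<sigma> \<and> possible_arrangement False A \<sigma>"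
  shows "\<exists>A' :: nat \<Rightarrow> real list. (\<forall>i<k. is_box n (A' i)) \<and>
           (\<forall>\<sigma>\<in>\<O>. possible_arrangement True A' \<sigma>)"
proof (intro exI[of _ "\<lambda>i. map squash (A i)"] conjI ballI allI impI)
  fix i assume "i < k"
  have "0 < squash x" for x using squash_bounds[of x] by linarith
  with \<open>i < k\<close> show "is_box n (map squash (A i))"
    using assms(1) by (intro is_box_map strict_mono_mono[OF strict_mono_squash]) auto
next
  fix \<sigma> assume "\<sigma> \<in> \<O>"
  then show "possible_arrangement True (\<lambda>i. map squash (A i)) \<sigma>"
    using assms(2) strict_mono_squash squash_le_double
    by (intro possible_arrangement_bounded_map) auto
qed

end
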